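(* A linear operator $T:\mathbb C[z]\to\mathbb C[z]$ preserves stability (i.e. $T(\mathcal H_1(\mathbb C))\subseteq\mathcal H_1(\mathbb C)\cup\{0\}$) if and only if either (a) $T$ has range of dimension at most one and $T(f)=\alpha(f)P$ for $f\in\mathbb C[z]$, where $\alpha:\mathbb C[z]\to\mathbb C$ is a linear functional and $P\in\mathcal H_1(\mathbb C)$; or (b) $T[(z+w)^n]\in\mathcal H_2(\mathbb C)\cup\{0\}$ for all $n\in\mathbb N$.
   Context: A polynomial $f\in\mathbb C[z_1,\dots,z_k]$ is stable if it is non-zero and $f(z_1,\dots,z_k)\neq0$ whenever $\Im z_j>0$ for all $j$; $\mathcal H_k(\mathbb C)$ is the set of stable polynomials in $k$ variables. $T$ is extended to polynomials in $z,w$ by $T(z^kw^\ell)=T(z^k)w^\ell$. *)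

theory Defs
  imports Complex_Main "HOL-Computational_Algebra.Polynomial"
begin

definition lin_op :: "(complex poly \<Rightarrow> complex poly) \<Rightarrow> bool" where
  "lin_op T \<longleftrightarrow> (\<forall>p q. T (p + q) = T p + T q) \<and> (\<forall>c p. T (smult c p) = smult c (T p))"

definition lin_fun :: "(complex poly \<Rightarrow> complex) \<Rightarrow> bool" where
  "lin_fun a \<longleftrightarrow> (\<forall>p q. a (p + q) = a p + a q) \<and> (\<forall>c p. a (smult c p) = c * a p)"

definition stable1 :: "complex poly \<Rightarrow> bool" where
  "stable1 f \<longleftrightarrow> f \<noteq> 0 \<and> (\<forall>z. Im z > 0 \<longrightarrow> poly f z \<noteq> 0)"

text \<open>Bivariate polynomials in z,w are represented as polynomials in w whose
  coefficients are polynomials in z: type complex poly poly.\<close>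
definition poly2 :: "complex poly poly \<Rightarrow> complex \<Rightarrow> complex \<Rightarrow> complex" where
  "poly2 q z w = poly (map_poly (\<lambda>c. poly c z) q) w"

definition stable2 :: "complex poly poly \<Rightarrow> bool" where
  "stable2 q \<longleftrightarrow> q \<noteq> 0 \<and> (\<forall>z w. Im z > 0 \<longrightarrow> Im w > 0 \<longrightarrow> poly2 q z w \<noteq> 0)"

text \<open>Extension of T to C[z,w] via T(z^k w^l) = T(z^k) w^l: apply T to each w-coefficient.\<close>
definition extend2 :: "(complex poly \<Rightarrow> complex poly) \<Rightarrow> complex poly poly \<Rightarrow> complex poly poly" where
  "extend2 T q = map_poly T q"

definition z_plus_w :: "complex poly poly" where
  "z_plus_w = [: [:0, 1:], [:1:] :]"

end

theory Submission
  imports Defs "HOL-Complex_Analysis.Great_Picard" "HOL-Computational_Algebra.Fundamental_Theorem_Algebra"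
begin

text \<open>Write S_n(z, w) = T[(z + w)^n]. For sufficiency, a polynomial f whose zeros all lie in the
  open lower half-plane is peeled one linear factor z - a at a time: the symbol of p |-> T((z - a) p)
  is ((n + 1) S_(n+1) - (w + a) d/dw S_(n+1)) / (n + 1), a polar derivative of w |-> S_(n+1)(z, w)
  with pole -a in the upper half-plane, and polar derivatives of polynomials without zeros in the
  upper half-plane have none there either. A general stable f is the limit of f(z + i/k), and
  Hurwitz's theorem carries stability to the limit.
  For necessity, if T is not of the rank-one form, then T((z + w)^N) is nonzero for every w in the
  upper half-plane once N is large: otherwise the perturbations (z + w)^N + e h would force T to map
  every polynomial of degree at most N to a stable polynomial or 0, which fails for a suitable
  combination of two inputs with independent images. So w |-> S_N(z, w) is stable, and by
  Gauss-Lucas so are its w-derivatives, which are multiples of S_n(z, w) for n \<le> N.\<close>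

lemma stable1_iff: "stable1 p \<longleftrightarrow> (\<forall>z. Im z > 0 \<longrightarrow> poly p z \<noteq> 0)"
proof -
  have "p \<noteq> 0" if "\<forall>z. Im z > 0 \<longrightarrow> poly p z \<noteq> 0"
    using that[rule_format, of \<i>] by auto
  then show ?thesis unfolding stable1_def by blast
qed

lemma stable1_smult_iff: "c \<noteq> 0 \<Longrightarrow> stable1 (smult c p) \<longleftrightarrow> stable1 p"
  by (simp add: stable1_iff)

lemma stable1_linear_power:
  assumes "Im a > 0"
  shows "stable1 ([:a, 1:] ^ n)"
proof -
  have "a + z \<noteq> 0" if "Im z > 0" for z
  proof -
    have "Im (a + z) \<noteq> 0" using assms that by simp
    then show ?thesis by (metis zero_complex.sel(2))
  qed
  then show ?thesis by (simp add: stable1_iff)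
qed

lemma exists_upper_nonroot:
  fixes p :: "complex poly"
  assumes "p \<noteq> 0"
  shows "\<exists>z. Im z > 0 \<and> poly p z \<noteq> 0"
proof (rule ccontr)
  assume "\<not> ?thesis"
  then have "range (\<lambda>k::nat. \<i> * of_nat (Suc k)) \<subseteq> {z. poly p z = 0}" by auto
  moreover have "infinite (range (\<lambda>k::nat. \<i> * of_nat (Suc k)))"
    by (rule range_inj_infinite) (auto simp: inj_def)
  ultimately show False using poly_roots_finite[OF assms] finite_subset by blast
qed

lemma poly_eq_0_if_upper_roots:
  fixes p :: "complex poly"
  assumes "\<And>z. Im z > 0 \<Longrightarrow> poly p z = 0"
  shows "p = 0"
  using assms exists_upper_nonroot by meson

lemma linear_factor_exists:
  fixes p :: "complex poly"
  assumes "degree p = Suc d"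
  obtains r q where "p = [:-r, 1:] * q" "degree q = d"
proof -
  have "\<not> constant (poly p)" using assms constant_degree by (metis nat.distinct(1))
  then obtain r where "poly p r = 0" using fundamental_theorem_of_algebra by blast
  then obtain q where q: "p = [:-r, 1:] * q" by (metis dvdE poly_eq_0_iff_dvd)
  with assms have "q \<noteq> 0" by auto
  then have "degree p = Suc (degree q)" unfolding q by (subst degree_mult_eq) auto
  with assms have "degree q = d" by simp
  with q show ?thesis by (rule that)
qed

lemma stable1_linear_factor:
  assumes "stable1 ([:-r, 1:] * q)"
  shows "stable1 q" "Im r \<le> 0"
proof -
  have eval: "poly ([:-r, 1:] * q) u = (u - r) * poly q u" for u by (simp add: algebra_simps)
  show "stable1 q" using assms by (auto simp: stable1_iff eval)
  show "Im r \<le> 0"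
  proof (rule ccontr)
    assume "\<not> Im r \<le> 0"
    then have "Im r > 0" by simp
    with assms have "poly ([:-r, 1:] * q) r \<noteq> 0" unfolding stable1_iff by blast
    then show False by (simp add: eval)
  qed
qed

definition poly_logderiv :: "complex poly \<Rightarrow> complex \<Rightarrow> complex" where
  "poly_logderiv p w = poly (pderiv p) w / poly p w"

lemma poly_logderiv_linear_factor:
  assumes "poly q w \<noteq> 0" "w \<noteq> r"
  shows "poly_logderiv ([:-r, 1:] * q) w = poly_logderiv q w + inverse (w - r)"
proof -
  have "poly (pderiv ([:-r, 1:] * q)) w = (w - r) * poly (pderiv q) w + poly q w"
    unfolding pderiv_mult by (simp add: pderiv_pCons algebra_simps)
  then show ?thesis using assms by (simp add: poly_logderiv_def field_simps)
qed

lemma Im_inverse_bound: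
  fixes A :: complex
  assumes "0 < h" "h \<le> Im A"
  shows "h * (cmod (inverse A))\<^sup>2 \<le> - Im (inverse A)"
proof -
  have "A \<noteq> 0" using assms by auto
  then have "0 < (cmod A)\<^sup>2" by simp
  have "(cmod (inverse A))\<^sup>2 = 1 / (cmod A)\<^sup>2" by (simp add: norm_divide power_divide inverse_eq_divide)
  moreover have "- Im (inverse A) = Im A / (cmod A)\<^sup>2" by (simp add: cmod_power2)
  ultimately show ?thesis using assms \<open>0 < (cmod A)\<^sup>2\<close> by (simp add: divide_right_mono)
qed

lemma logderiv_sum_bound:
  fixes L u :: complex and h d :: real
  assumes "0 < h" "0 \<le> d"
    and L: "h * (cmod L)\<^sup>2 \<le> d * - Im L" and u: "h * (cmod u)\<^sup>2 \<le> - Im u"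
  shows "h * (cmod (L + u))\<^sup>2 \<le> (d + 1) * - Im (L + u)"
proof (cases "d = 0")
  case True
  with L \<open>0 < h\<close> have "L = 0" by (simp add: mult_le_0_iff)
  with True u show ?thesis by simp
next
  case False
  with \<open>0 \<le> d\<close> have "0 < d" by simp
  have cauchy_schwarz: "d * (cmod (L + u))\<^sup>2 \<le> (d + 1) * ((cmod L)\<^sup>2 + d * (cmod u)\<^sup>2)"
  proof -
    have "0 \<le> (Re L - d * Re u)\<^sup>2 + (Im L - d * Im u)\<^sup>2" by simp
    then show ?thesis unfolding cmod_power2 by (simp add: algebra_simps power2_eq_square)
  qed
  have "d * (h * (cmod (L + u))\<^sup>2) \<le> (d + 1) * (h * (cmod L)\<^sup>2 + d * (h * (cmod u)\<^sup>2))"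
    using mult_left_mono[OF cauchy_schwarz, of h] \<open>0 < h\<close> by (simp add: algebra_simps)
  also have "\<dots> \<le> (d + 1) * (d * - Im L + d * - Im u)"
    using L u \<open>0 < d\<close> by (intro mult_left_mono add_mono) auto
  also have "\<dots> = d * ((d + 1) * - Im (L + u))" by (simp add: algebra_simps)
  finally show ?thesis using \<open>0 < d\<close> by simp
qed

text \<open>With p'/p = \<Sum> 1/(w - r) over the roots r, all in Im r \<le> 0, every term u satisfies
  Im w |u|^2 \<le> -Im u; the bound is Cauchy-Schwarz applied to this sum, one root per induction step.\<close>

lemma stable1_logderiv_bound:
  assumes "stable1 p" "Im w > 0"
  shows "Im w * (cmod (poly_logderiv p w))\<^sup>2 \<le> degree p * - Im (poly_logderiv p w)"
  using assms(1)
proof (induction "degree p" arbitrary: p)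
  case 0
  then have "pderiv p = 0" by (simp add: pderiv_eq_0_iff)
  then show ?case by (simp add: poly_logderiv_def)
next
  case (Suc d)
  obtain r q where p: "p = [:-r, 1:] * q" and q: "degree q = d"
    using linear_factor_exists[OF Suc.hyps(2)[symmetric]] .
  from Suc.prems have "stable1 q" "Im r \<le> 0" unfolding p by (rule stable1_linear_factor)+
  with assms(2) have "poly q w \<noteq> 0" "w \<noteq> r" by (auto simp: stable1_iff)
  then have logderiv_p: "poly_logderiv p w = poly_logderiv q w + inverse (w - r)"
    unfolding p by (rule poly_logderiv_linear_factor)
  have IH: "Im w * (cmod (poly_logderiv q w))\<^sup>2 \<le> d * - Im (poly_logderiv q w)"
    using Suc.hyps(1)[OF q[symmetric] \<open>stable1 q\<close>] q by simp
  have "Im w * (cmod (inverse (w - r)))\<^sup>2 \<le> - Im (inverse (w - r))"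
    using assms(2) \<open>Im r \<le> 0\<close> by (intro Im_inverse_bound) auto
  then have "Im w * (cmod (poly_logderiv p w))\<^sup>2 \<le> (real d + 1) * - Im (poly_logderiv p w)"
    unfolding logderiv_p by (rule logderiv_sum_bound[OF assms(2) of_nat_0_le_iff IH])
  then show ?case by (simp add: Suc.hyps(2)[symmetric] add.commute)
qed

lemma stable1_Im_logderiv_nonpos:
  assumes "stable1 p" "Im w > 0"
  shows "Im (poly_logderiv p w) \<le> 0"
proof (rule ccontr)
  assume "\<not> ?thesis"
  then have "degree p * - Im (poly_logderiv p w) \<le> 0" by (simp add: mult_nonneg_nonpos)
  with stable1_logderiv_bound[OF assms] have "Im w * (cmod (poly_logderiv p w))\<^sup>2 \<le> 0"
    by linarith
  with assms(2) have "poly_logderiv p w = 0" by (simp add: mult_le_0_iff)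
  with \<open>\<not> ?thesis\<close> show False by simp
qed

lemma stable1_pderiv:
  assumes "stable1 p" "degree p > 0"
  shows "stable1 (pderiv p)"
proof -
  from assms(2) have "degree p = Suc (degree p - 1)" by simp
  then obtain r q where p: "p = [:-r, 1:] * q" by (rule linear_factor_exists)
  from assms(1) have q: "stable1 q" "Im r \<le> 0" unfolding p by (rule stable1_linear_factor)+
  show ?thesis unfolding stable1_iff
  proof (intro allI impI)
    fix w :: complex assume w: "Im w > 0"
    with q have "poly q w \<noteq> 0" "w \<noteq> r" by (auto simp: stable1_iff)
    then have logderiv_p: "poly_logderiv p w = poly_logderiv q w + inverse (w - r)"
      unfolding p by (rule poly_logderiv_linear_factor)
    have "0 < Im (w - r)" using w q(2) by simp
    then have "0 < (Re (w - r))\<^sup>2 + (Im (w - r))\<^sup>2" by (simp add: add_nonneg_pos)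
    with \<open>0 < Im (w - r)\<close> have "Im (inverse (w - r)) < 0" by (simp add: divide_neg_pos)
    moreover have "Im (poly_logderiv p w) = Im (poly_logderiv q w) + Im (inverse (w - r))"
      unfolding logderiv_p by (rule plus_complex.sel)
    ultimately have "Im (poly_logderiv p w) < 0"
      using stable1_Im_logderiv_nonpos[OF q(1) w] by linarith
    then have "poly_logderiv p w \<noteq> 0" by auto
    then show "poly (pderiv p) w \<noteq> 0" by (auto simp: poly_logderiv_def)
  qed
qed

text \<open>If the polar derivative vanished, p'/p would equal n/(w - \<zeta>), and the log-derivative bound
  would give Im w * n \<le> deg p * Im (w - \<zeta>) < n * Im w.\<close>

lemma stable1_polar_derivative:
  assumes "stable1 p" "degree p \<le> n" "n > 0" "Im w > 0" "Im \<zeta> > 0"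
  shows "of_nat n * poly p w - (w - \<zeta>) * poly (pderiv p) w \<noteq> 0"
proof
  assume polar: "of_nat n * poly p w - (w - \<zeta>) * poly (pderiv p) w = 0"
  define D where "D = w - \<zeta>"
  have "poly p w \<noteq> 0" using assms by (auto simp: stable1_iff)
  with polar assms(3) have "D \<noteq> 0" by (auto simp: D_def)
  with polar \<open>poly p w \<noteq> 0\<close> have L: "poly_logderiv p w = of_nat n / D"
    by (simp add: poly_logderiv_def D_def field_simps)
  define s where "s = (Re D)\<^sup>2 + (Im D)\<^sup>2"
  have "s > 0" using \<open>D \<noteq> 0\<close> by (simp add: s_def complex_eq_iff add_pos_nonneg sum_power2_gt_zero_iff)
  have "Im w * ((real n)\<^sup>2 / s) \<le> degree p * (real n * Im D / s)"
    using stable1_logderiv_bound[OF assms(1,4)]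
    by (simp add: L norm_divide cmod_power2 s_def power_divide Im_divide)
  then have key: "Im w * real n \<le> degree p * Im D"
    using \<open>s > 0\<close> assms(3) by (simp add: field_simps power2_eq_square)
  have "Im D < Im w" using assms(5) by (simp add: D_def)
  show False
  proof (cases "Im D > 0")
    case True
    then have "degree p * Im D \<le> real n * Im D" using assms(2) by (simp add: mult_right_mono)
    also have "\<dots> < real n * Im w" using \<open>Im D < Im w\<close> assms(3) by simp
    finally show False using key by (simp add: mult.commute)
  next
    case False
    then have "degree p * Im D \<le> 0" by (simp add: mult_nonneg_nonpos)
    with key assms(3,4) show False by (smt (verit) of_nat_0_less_iff mult_pos_pos)
  qed
qed

lemma lin_op_add: "lin_op T \<Longrightarrow> T (p + q) = T p + T q"
  by (simp add: lin_op_def)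

lemma lin_op_smult: "lin_op T \<Longrightarrow> T (smult c p) = smult c (T p)"
  by (simp add: lin_op_def)

lemma lin_op_zero: "lin_op T \<Longrightarrow> T 0 = 0"
  using lin_op_smult[of T 0 0] by simp

lemma lin_op_diff: "lin_op T \<Longrightarrow> T (p - q) = T p - T q"
  using lin_op_add[of T p "- q"] lin_op_smult[of T "- 1" q] by simp

lemma lin_op_sum: "lin_op T \<Longrightarrow> T (\<Sum>i\<in>A. g i) = (\<Sum>i\<in>A. T (g i))"
  by (induction A rule: infinite_finite_induct) (auto simp: lin_op_zero lin_op_add)

lemma lin_op_mult_left: "lin_op T \<Longrightarrow> lin_op (\<lambda>p. T (r * p))"
  unfolding lin_op_def by (simp add: distrib_left)

lemma poly_lin_op_expansion:
  assumes lin: "lin_op T" and "degree q \<le> n"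
  shows "poly (T q) z = (\<Sum>i\<le>n. coeff q i * poly (T (monom 1 i)) z)"
proof -
  have "T q = T (\<Sum>i\<le>n. monom (coeff q i) i)"
    using poly_as_sum_of_monoms'[OF assms(2)] by simp
  also have "\<dots> = (\<Sum>i\<le>n. smult (coeff q i) (T (monom 1 i)))"
    by (simp add: lin_op_sum[OF lin] lin_op_smult[OF lin, symmetric] smult_monom)
  finally show ?thesis by (simp add: poly_sum)
qed

definition symbol_slice :: "(complex poly \<Rightarrow> complex poly) \<Rightarrow> nat \<Rightarrow> complex \<Rightarrow> complex poly" where
  "symbol_slice T n z = map_poly (\<lambda>c. poly (T c) z) (z_plus_w ^ n)"

lemma poly_map_poly_lin_op:
  assumes lin: "lin_op T"
  shows "poly (map_poly (\<lambda>c. poly (T c) z) q) w = poly (T (poly q [:w:])) z"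
proof (induction q)
  case 0
  then show ?case by (simp add: lin_op_zero[OF lin])
next
  case (pCons a q)
  have "[:w:] * poly q [:w:] = smult w (poly q [:w:])" by simp
  with pCons show ?case
    by (simp add: map_poly_pCons lin_op_zero[OF lin] lin_op_add[OF lin] lin_op_smult[OF lin])
qed

lemma poly2_extend2:
  assumes lin: "lin_op T"
  shows "poly2 (extend2 T q) z w = poly (T (poly q [:w:])) z"
  by (simp add: poly2_def extend2_def map_poly_map_poly lin_op_zero[OF lin] o_def
      poly_map_poly_lin_op[OF lin])

lemma poly_z_plus_w_power: "poly (z_plus_w ^ n) [:w:] = [:w, 1:] ^ n"
  by (simp add: z_plus_w_def)

lemma poly_symbol_slice:
  assumes "lin_op T"
  shows "poly (symbol_slice T n z) w = poly (T ([:w, 1:] ^ n)) z"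
  by (simp only: symbol_slice_def poly_map_poly_lin_op[OF assms] poly_z_plus_w_power)

lemma degree_symbol_slice: "degree (symbol_slice T n z) \<le> n"
proof -
  have "degree (symbol_slice T n z) \<le> degree (z_plus_w ^ n)"
    unfolding symbol_slice_def by (rule map_poly_degree_leq)
  also have "\<dots> \<le> n" using degree_power_le[of z_plus_w n] by (simp add: z_plus_w_def)
  finally show ?thesis .
qed

lemma pderiv_map_poly_linear:
  fixes L :: "'a::idom poly \<Rightarrow> 'a"
  assumes L: "\<And>c a. L (smult c a) = c * L a"
  shows "pderiv (map_poly L q) = map_poly L (pderiv q)"
proof -
  have "L 0 = 0" using L[of 0 0] by simp
  then show ?thesis
    by (intro poly_eqI) (simp add: coeff_pderiv coeff_map_poly of_nat_poly L del: of_nat_Suc)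
qed

lemma map_poly_linear_smult_of_nat:
  fixes L :: "'a::idom poly \<Rightarrow> 'a"
  assumes L: "\<And>c a. L (smult c a) = c * L a"
  shows "map_poly L (smult (of_nat m) X) = smult (of_nat m) (map_poly L X)"
proof -
  have "L 0 = 0" using L[of 0 0] by simp
  then show ?thesis
    by (intro poly_eqI) (simp add: coeff_map_poly of_nat_poly L del: of_nat_Suc)
qed

lemma pderiv_symbol_slice:
  assumes lin: "lin_op T"
  shows "pderiv (symbol_slice T (Suc n) z) = smult (of_nat (Suc n)) (symbol_slice T n z)"
proof -
  have L: "poly (T (smult c a)) z = c * poly (T a) z" for c a by (simp add: lin_op_smult[OF lin])
  have "pderiv z_plus_w = 1" by (simp add: z_plus_w_def pderiv_pCons one_pCons)
  then have "pderiv (z_plus_w ^ Suc n) = smult (of_nat (Suc n)) (z_plus_w ^ n)"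
    by (simp add: pderiv_power_Suc del: power_Suc of_nat_Suc)
  then show ?thesis
    unfolding symbol_slice_def
    by (simp only: pderiv_map_poly_linear[OF L] map_poly_linear_smult_of_nat[OF L])
qed

definition stability_preserver :: "(complex poly \<Rightarrow> complex poly) \<Rightarrow> bool" where
  "stability_preserver T \<longleftrightarrow> (\<forall>f. stable1 f \<longrightarrow> stable1 (T f) \<or> T f = 0)"

lemma stability_preserverD: "stability_preserver T \<Longrightarrow> stable1 f \<Longrightarrow> stable1 (T f) \<or> T f = 0"
  by (simp add: stability_preserver_def)

definition stable_rank_one :: "(complex poly \<Rightarrow> complex poly) \<Rightarrow> bool" where
  "stable_rank_one T \<longleftrightarrow> (\<exists>\<alpha> P. lin_fun \<alpha> \<and> stable1 P \<and> (\<forall>f. T f = smult (\<alpha> f) P))"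

definition symbol_condition :: "(complex poly \<Rightarrow> complex poly) \<Rightarrow> nat \<Rightarrow> bool" where
  "symbol_condition T n \<longleftrightarrow>
     (\<forall>z w. Im z > 0 \<longrightarrow> Im w > 0 \<longrightarrow> poly (T ([:w, 1:] ^ n)) z \<noteq> 0) \<or> (\<forall>w. T ([:w, 1:] ^ n) = 0)"

lemma poly2_eq_0_if_vanishing:
  assumes "\<And>z w. poly2 q z w = 0"
  shows "q = 0"
proof (rule poly_eqI)
  fix k
  have "map_poly (\<lambda>c. poly c z) q = 0" for z
    using assms poly_all_0_iff_0 unfolding poly2_def by blast
  then have "poly (coeff q k) z = 0" for z
    by (metis coeff_0 coeff_map_poly poly_0)
  then have "coeff q k = 0" using poly_all_0_iff_0 by blast
  then show "coeff q k = coeff 0 k" by simp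
qed

lemma symbol_condition_iff:
  assumes lin: "lin_op T"
  shows "symbol_condition T n \<longleftrightarrow>
         stable2 (extend2 T (z_plus_w ^ n)) \<or> extend2 T (z_plus_w ^ n) = 0"
proof -
  have eval: "poly2 (extend2 T (z_plus_w ^ n)) z w = poly (T ([:w, 1:] ^ n)) z" for z w
    by (simp only: poly2_extend2[OF lin] poly_z_plus_w_power)
  have zero_iff: "extend2 T (z_plus_w ^ n) = 0 \<longleftrightarrow> (\<forall>w. T ([:w, 1:] ^ n) = 0)"
  proof
    assume "extend2 T (z_plus_w ^ n) = 0"
    then have "poly (T ([:w, 1:] ^ n)) z = 0" for z w by (simp flip: eval add: poly2_def)
    then show "\<forall>w. T ([:w, 1:] ^ n) = 0" using poly_all_0_iff_0 by blast
  next
    assume "\<forall>w. T ([:w, 1:] ^ n) = 0"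
    then show "extend2 T (z_plus_w ^ n) = 0" by (intro poly2_eq_0_if_vanishing) (simp add: eval)
  qed
  have "Im \<i> > 0" by simp
  then have "stable2 (extend2 T (z_plus_w ^ n)) \<longleftrightarrow>
             (\<forall>z w. Im z > 0 \<longrightarrow> Im w > 0 \<longrightarrow> poly (T ([:w, 1:] ^ n)) z \<noteq> 0)"
    unfolding stable2_def eval[symmetric] by (metis eval poly2_def map_poly_0 poly_0)
  with zero_iff show ?thesis unfolding symbol_condition_def by blast
qed

lemma poly_growth_bound:
  fixes q :: "complex poly" and \<delta> :: real
  assumes "degree q \<le> N" "\<delta> > 0"
  obtains C where "C \<ge> 0" "\<And>u. \<delta> \<le> cmod u \<Longrightarrow> cmod (poly q u) \<le> C * cmod u ^ N"
proof -
  define C where "C = (\<Sum>k\<le>N. cmod (coeff q k) / \<delta> ^ (N - k))"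
  have "C \<ge> 0" unfolding C_def using assms(2) by (intro sum_nonneg) auto
  moreover have "cmod (poly q u) \<le> C * cmod u ^ N" if u: "\<delta> \<le> cmod u" for u
  proof -
    have pow: "cmod u ^ k \<le> cmod u ^ N / \<delta> ^ (N - k)" if "k \<le> N" for k
    proof -
      have "\<delta> ^ (N - k) * cmod u ^ k \<le> cmod u ^ (N - k) * cmod u ^ k"
        using u assms(2) by (intro mult_right_mono power_mono) auto
      also have "\<dots> = cmod u ^ N" using that by (simp flip: power_add)
      finally show ?thesis using assms(2) by (simp add: field_simps)
    qed
    have "poly q u = (\<Sum>k\<le>N. coeff q k * u ^ k)"
      by (subst poly_as_sum_of_monoms'[OF assms(1), symmetric]) (simp add: poly_sum poly_monom)
    then have "cmod (poly q u) \<le> (\<Sum>k\<le>N. cmod (coeff q k) * cmod u ^ k)"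
      by (simp add: norm_sum norm_mult norm_power order_trans[OF norm_sum])
    also have "\<dots> \<le> (\<Sum>k\<le>N. cmod (coeff q k) * (cmod u ^ N / \<delta> ^ (N - k)))"
      by (intro sum_mono mult_left_mono pow) auto
    also have "\<dots> = C * cmod u ^ N" by (simp add: C_def sum_distrib_right)
    finally show ?thesis .
  qed
  ultimately show ?thesis by (rule that)
qed

text \<open>On the upper half-plane |z + a| > Im a, and h(z) = O(|z + a|^N) there.\<close>

lemma stable1_power_perturb:
  assumes a: "Im a > 0" and "degree h \<le> N"
  obtains \<epsilon> where "\<epsilon> \<noteq> 0" "stable1 ([:a, 1:] ^ N + smult \<epsilon> h)"
proof -
  define q where "q = pcompose h [:-a, 1:]"
  have q: "poly h z = poly q (z + a)" for z by (simp add: q_def poly_pcompose)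
  have "degree q \<le> N" using assms(2) by (simp add: q_def degree_pcompose)
  then obtain C where "C \<ge> 0" and C: "\<And>u. Im a \<le> cmod u \<Longrightarrow> cmod (poly q u) \<le> C * cmod u ^ N"
    using poly_growth_bound a by blast
  define \<epsilon> where "\<epsilon> = 1 / (C + 1)"
  have "\<epsilon> > 0" "\<epsilon> * C < 1" using \<open>C \<ge> 0\<close> by (simp_all add: \<epsilon>_def field_simps)
  have "poly ([:a, 1:] ^ N + smult (of_real \<epsilon>) h) z \<noteq> 0" if z: "Im z > 0" for z
  proof
    assume "poly ([:a, 1:] ^ N + smult (of_real \<epsilon>) h) z = 0"
    then have "(z + a) ^ N = - (of_real \<epsilon> * poly q (z + a))"
      by (simp add: q add.commute eq_neg_iff_add_eq_0)
    then have "cmod ((z + a) ^ N) = \<epsilon> * cmod (poly q (z + a))"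
      using \<open>\<epsilon> > 0\<close> by (simp add: norm_mult)
    then have eq: "cmod (z + a) ^ N = \<epsilon> * cmod (poly q (z + a))" by (simp add: norm_power)
    have "Im a < cmod (z + a)" using z abs_Im_le_cmod[of "z + a"] by simp
    then have "0 < cmod (z + a) ^ N" using a by (intro zero_less_power) linarith
    note eq
    also have "\<epsilon> * cmod (poly q (z + a)) \<le> \<epsilon> * (C * cmod (z + a) ^ N)"
      using C[of "z + a"] \<open>Im a < cmod (z + a)\<close> \<open>\<epsilon> > 0\<close> by simp
    also have "\<dots> < cmod (z + a) ^ N"
      using \<open>\<epsilon> * C < 1\<close> \<open>0 < cmod (z + a) ^ N\<close> by (simp add: mult.assoc[symmetric])
    finally show False by simp
  qed
  then have "stable1 ([:a, 1:] ^ N + smult (of_real \<epsilon>) h)" by (simp add: stable1_iff)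
  moreover have "(of_real \<epsilon> :: complex) \<noteq> 0" using \<open>\<epsilon> > 0\<close> by simp
  ultimately show ?thesis using that by blast
qed

lemma lin_op_eq_0_if_kills_stable:
  assumes lin: "lin_op T" and kills: "\<And>g. stable1 g \<Longrightarrow> T g = 0"
  shows "T h = 0"
proof -
  have i: "Im \<i> > 0" by simp
  obtain \<epsilon> where "\<epsilon> \<noteq> 0" "stable1 ([:\<i>, 1:] ^ degree h + smult \<epsilon> h)"
    using stable1_power_perturb[OF i order_refl] .
  then have "T ([:\<i>, 1:] ^ degree h) + smult \<epsilon> (T h) = 0"
    using kills by (simp flip: lin_op_add[OF lin] lin_op_smult[OF lin])
  with kills[OF stable1_linear_power[OF i]] \<open>\<epsilon> \<noteq> 0\<close> show ?thesis by simp
qed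

lemma preserver_of_killed_power:
  assumes lin: "lin_op T" and pres: "stability_preserver T" and a: "Im a > 0"
    and killed: "T ([:a, 1:] ^ N) = 0" and "degree h \<le> N"
  shows "stable1 (T h) \<or> T h = 0"
proof -
  obtain \<epsilon> where "\<epsilon> \<noteq> 0" and stable: "stable1 ([:a, 1:] ^ N + smult \<epsilon> h)"
    using stable1_power_perturb[OF a \<open>degree h \<le> N\<close>] .
  have "T ([:a, 1:] ^ N + smult \<epsilon> h) = smult \<epsilon> (T h)"
    using killed by (simp add: lin_op_add[OF lin] lin_op_smult[OF lin])
  with stability_preserverD[OF pres stable]
  have "stable1 (smult \<epsilon> (T h)) \<or> smult \<epsilon> (T h) = 0" by simp
  with \<open>\<epsilon> \<noteq> 0\<close> show ?thesis by (simp add: stable1_smult_iff)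
qed

lemma stable_rank_one_if_dependent:
  assumes lin: "lin_op T" and pres: "stability_preserver T"
    and dep: "\<And>f g. T g \<noteq> 0 \<Longrightarrow> \<exists>c. T f = smult c (T g)"
  shows "stable_rank_one T"
proof (cases "\<forall>g. stable1 g \<longrightarrow> T g = 0")
  case True
  then have "T f = smult 0 1" for f using lin_op_eq_0_if_kills_stable[OF lin] by simp
  moreover have "lin_fun (\<lambda>_. 0)" "stable1 1" by (simp_all add: lin_fun_def stable1_def)
  ultimately show ?thesis unfolding stable_rank_one_def by blast
next
  case False
  then obtain g where g: "stable1 g" "T g \<noteq> 0" by blast
  define P where "P = T g"
  have P: "stable1 P" "P \<noteq> 0" using g stability_preserverD[OF pres g(1)] by (auto simp: P_def)
  define \<alpha> where "\<alpha> f = (SOME c. T f = smult c P)" for f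
  have \<alpha>: "T f = smult (\<alpha> f) P" for f
    unfolding \<alpha>_def P_def by (rule someI_ex) (rule dep[OF g(2)])
  have cancel: "a = b" if "smult a P = smult b P" for a b
    using that P(2) by (metis diff_self smult_diff_left smult_eq_0_iff right_minus_eq)
  have "lin_fun \<alpha>"
    unfolding lin_fun_def
  proof (intro conjI allI)
    fix p q
    show "\<alpha> (p + q) = \<alpha> p + \<alpha> q"
      by (rule cancel) (metis \<alpha> lin_op_add[OF lin] smult_add_left)
  next
    fix c p
    show "\<alpha> (smult c p) = c * \<alpha> p"
      by (rule cancel) (metis \<alpha> lin_op_smult[OF lin] smult_smult)
  qed
  with P \<alpha> show ?thesis unfolding stable_rank_one_def by blast
qed

lemma stable_rank_one_preserver: "stable_rank_one T \<Longrightarrow> stability_preserver T"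
  unfolding stable_rank_one_def stability_preserver_def
  by (metis smult_eq_0_iff stable1_smult_iff)

lemma preserver_power_nonzero:
  assumes lin: "lin_op T" and pres: "stability_preserver T"
    and g: "T g \<noteq> 0" and indep: "\<And>c. T f \<noteq> smult c (T g)"
    and "degree f \<le> N" "degree g \<le> N" and a: "Im a > 0"
  shows "T ([:a, 1:] ^ N) \<noteq> 0"
proof
  assume killed: "T ([:a, 1:] ^ N) = 0"
  obtain z where z: "Im z > 0" "poly (T g) z \<noteq> 0" using exists_upper_nonroot[OF g] by blast
  define c where "c = - poly (T f) z / poly (T g) z"
  have "degree (f + smult c g) \<le> N"
    using assms(5,6) degree_smult_le[of c g] by (intro degree_add_le) auto
  with lin pres a killed have "stable1 (T (f + smult c g)) \<or> T (f + smult c g) = 0"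
    by (rule preserver_of_killed_power)
  moreover have "T (f + smult c g) = T f + smult c (T g)"
    by (simp only: lin_op_add[OF lin] lin_op_smult[OF lin])
  moreover have "poly (T f + smult c (T g)) z = 0" using z by (simp add: c_def)
  ultimately have "T f + smult c (T g) = 0" using z by (auto simp: stable1_def)
  then have "T f = smult (- c) (T g)" by (simp add: eq_neg_iff_add_eq_0)
  with indep show False by blast
qed

lemma stable1_symbol_slice_descend:
  assumes lin: "lin_op T" and top: "stable1 (symbol_slice T N z)" and "k \<le> N"
  shows "stable1 (symbol_slice T k z) \<or> symbol_slice T k z = 0"
  using \<open>k \<le> N\<close>
proof (induction k rule: inc_induct)
  case base
  from top show ?case ..
next
  case (step m)
  have "stable1 (pderiv (symbol_slice T (Suc m) z)) \<or> pderiv (symbol_slice T (Suc m) z) = 0"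
    using step.IH stable1_pderiv by (auto simp: pderiv_eq_0_iff)
  then show ?case
    by (simp add: pderiv_symbol_slice[OF lin] stable1_smult_iff del: of_nat_Suc)
qed

lemma preserver_stable1_symbol_slice:
  assumes lin: "lin_op T" and pres: "stability_preserver T"
    and nonzero: "\<And>w. Im w > 0 \<Longrightarrow> T ([:w, 1:] ^ N) \<noteq> 0" and "Im z > 0"
  shows "stable1 (symbol_slice T N z)"
  unfolding stable1_iff
proof (intro allI impI)
  fix w :: complex assume "Im w > 0"
  with nonzero stability_preserverD[OF pres stable1_linear_power[OF \<open>Im w > 0\<close>]]
  have "stable1 (T ([:w, 1:] ^ N))" by blast
  with \<open>Im z > 0\<close> show "poly (symbol_slice T N z) w \<noteq> 0"
    by (simp add: poly_symbol_slice[OF lin] stable1_def)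
qed

lemma preserver_symbol_condition:
  assumes lin: "lin_op T" and pres: "stability_preserver T" and "\<not> stable_rank_one T"
  shows "symbol_condition T n"
proof -
  have "\<not> (\<forall>f g. T g \<noteq> 0 \<longrightarrow> (\<exists>c. T f = smult c (T g)))"
    using stable_rank_one_if_dependent[OF lin pres] assms(3) by metis
  then obtain f g where g: "T g \<noteq> 0" and indep: "\<And>c. T f \<noteq> smult c (T g)" by blast
  define N where "N = max n (max (degree f) (degree g))"
  have "degree f \<le> N" "degree g \<le> N" "n \<le> N" by (simp_all add: N_def)
  have nonzero: "T ([:w, 1:] ^ N) \<noteq> 0" if "Im w > 0" for w
    using preserver_power_nonzero[OF lin pres g indep \<open>degree f \<le> N\<close> \<open>degree g \<le> N\<close> that] .
  have top: "stable1 (symbol_slice T N z)" if "Im z > 0" for z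
    using preserver_stable1_symbol_slice[OF lin pres nonzero that] .
  show ?thesis
  proof (cases "\<forall>z w. Im z > 0 \<longrightarrow> Im w > 0 \<longrightarrow> poly (T ([:w, 1:] ^ n)) z \<noteq> 0")
    case True
    then show ?thesis unfolding symbol_condition_def by blast
  next
    case False
    then obtain z0 w0 where z0: "Im z0 > 0" "poly (T ([:w0, 1:] ^ n)) z0 = 0" and "Im w0 > 0"
      by blast
    have killed: "T ([:w0, 1:] ^ n) = 0"
      using stability_preserverD[OF pres stable1_linear_power[OF \<open>Im w0 > 0\<close>]] z0
      by (auto simp: stable1_iff)
    have slice_zero: "symbol_slice T n z = 0" if "Im z > 0" for z
    proof -
      have "poly (symbol_slice T n z) w0 = 0" using killed by (simp add: poly_symbol_slice[OF lin])
      with \<open>Im w0 > 0\<close> have "\<not> stable1 (symbol_slice T n z)" by (auto simp: stable1_iff)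
      then show ?thesis using stable1_symbol_slice_descend[OF lin top[OF that] \<open>n \<le> N\<close>] by blast
    qed
    have "poly (T ([:w, 1:] ^ n)) z = 0" if "Im z > 0" for z w
      using poly_symbol_slice[OF lin, of n z w] slice_zero[OF that] by simp
    then have "T ([:w, 1:] ^ n) = 0" for w by (rule poly_eq_0_if_upper_roots)
    then show ?thesis unfolding symbol_condition_def by blast
  qed
qed

lemma symbol_condition_mult_linear:
  assumes lin: "lin_op T" and cond: "symbol_condition T (Suc n)" and a: "Im a < 0"
  shows "symbol_condition (\<lambda>p. T ([:-a, 1:] * p)) n"
proof -
  have factor: "[:-a, 1:] * [:w, 1:] ^ n = [:w, 1:] ^ Suc n - smult (w + a) ([:w, 1:] ^ n)" for w
    by (rule poly_ext) (simp add: algebra_simps)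
  have symbol: "of_nat (Suc n) * poly (T ([:-a, 1:] * [:w, 1:] ^ n)) z =
      of_nat (Suc n) * poly (symbol_slice T (Suc n) z) w
        - (w - (- a)) * poly (pderiv (symbol_slice T (Suc n) z)) w" for z w
    unfolding factor lin_op_diff[OF lin] lin_op_smult[OF lin]
    by (simp add: poly_symbol_slice[OF lin] pderiv_symbol_slice[OF lin] algebra_simps
        del: of_nat_Suc power_Suc)
  from cond consider
      (nonzero) "\<forall>z w. Im z > 0 \<longrightarrow> Im w > 0 \<longrightarrow> poly (T ([:w, 1:] ^ Suc n)) z \<noteq> 0"
    | (vanishing) "\<forall>w. T ([:w, 1:] ^ Suc n) = 0"
    unfolding symbol_condition_def by blast
  then show ?thesis
  proof cases
    case nonzero
    have "poly (T ([:-a, 1:] * [:w, 1:] ^ n)) z \<noteq> 0" if "Im z > 0" "Im w > 0" for z w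
    proof -
      have "stable1 (symbol_slice T (Suc n) z)"
        using nonzero that by (simp add: stable1_iff poly_symbol_slice[OF lin])
      then have "of_nat (Suc n) * poly (symbol_slice T (Suc n) z) w
                 - (w - (- a)) * poly (pderiv (symbol_slice T (Suc n) z)) w \<noteq> 0"
        using that a by (intro stable1_polar_derivative degree_symbol_slice) auto
      then show ?thesis using symbol[of w z] by (metis mult_zero_right)
    qed
    then show ?thesis unfolding symbol_condition_def by blast
  next
    case vanishing
    then have "symbol_slice T (Suc n) z = 0" for z
      by (simp add: poly_all_0_iff_0[symmetric] poly_symbol_slice[OF lin] del: power_Suc)
    then have "poly (T ([:-a, 1:] * [:w, 1:] ^ n)) z = 0" for z w
      using symbol[of w z] by (simp del: of_nat_Suc)
    then have "T ([:-a, 1:] * [:w, 1:] ^ n) = 0" for w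
      using poly_all_0_iff_0 by blast
    then show ?thesis unfolding symbol_condition_def by blast
  qed
qed

lemma symbol_condition_preserves_lower_rooted:
  assumes "lin_op T" "symbol_condition T (degree f)" "\<And>u. Im u \<ge> 0 \<Longrightarrow> poly f u \<noteq> 0"
  shows "stable1 (T f) \<or> T f = 0"
  using assms
proof (induction "degree f" arbitrary: T f)
  case 0
  then obtain c where f: "f = [:c:]" by (metis degree_eq_zeroE)
  with "0.prems"(3)[of 0] have "c \<noteq> 0" by simp
  have Tf: "T f = smult c (T 1)" using lin_op_smult[OF "0.prems"(1), of c 1] f by simp
  from "0.prems"(2) "0.hyps" consider
      "\<forall>z w. Im z > 0 \<longrightarrow> Im w > 0 \<longrightarrow> poly (T 1) z \<noteq> 0" | "T 1 = 0"
    unfolding symbol_condition_def by auto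
  then have "stable1 (T 1) \<or> T 1 = 0"
  proof cases
    case 1
    then have "poly (T 1) z \<noteq> 0" if "Im z > 0" for z using 1[rule_format, of z \<i>] that by simp
    then show ?thesis by (simp add: stable1_iff)
  qed simp
  with \<open>c \<noteq> 0\<close> show ?case by (auto simp: Tf stable1_smult_iff)
next
  case (Suc d)
  obtain a g where f: "f = [:-a, 1:] * g" and g: "degree g = d"
    using linear_factor_exists[OF Suc.hyps(2)[symmetric]] .
  have eval: "poly f u = (u - a) * poly g u" for u by (simp add: f algebra_simps)
  have "poly f a = 0" by (simp add: eval)
  with Suc.prems(3) have "Im a < 0" using not_le by blast
  have "symbol_condition T (Suc d)" using Suc.prems(2) Suc.hyps(2) by simp
  then have "symbol_condition (\<lambda>p. T ([:-a, 1:] * p)) (degree g)"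
    unfolding g by (rule symbol_condition_mult_linear[OF Suc.prems(1) _ \<open>Im a < 0\<close>])
  moreover have "\<And>u. Im u \<ge> 0 \<Longrightarrow> poly g u \<noteq> 0" using Suc.prems(3) by (simp add: eval)
  ultimately have "stable1 (T ([:-a, 1:] * g)) \<or> T ([:-a, 1:] * g) = 0"
    by (rule Suc.hyps(1)[OF g[symmetric] lin_op_mult_left[OF Suc.prems(1)]])
  then show ?case by (simp only: f)
qed

lemma coeff_pcompose_shift_tendsto:
  fixes t :: "nat \<Rightarrow> complex"
  assumes "t \<longlonglongrightarrow> 0"
  shows "(\<lambda>k. coeff (pcompose p [:t k, 1:]) i) \<longlonglongrightarrow> coeff p i"
proof (induction p arbitrary: i)
  case 0
  then show ?case by simp
next
  case (pCons a p)
  have expand: "coeff (pcompose (pCons a p) [:s, 1:]) i = coeff [:a:] i + s * coeff (pcompose p [:s, 1:]) i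
      + (case i of 0 \<Rightarrow> 0 | Suc j \<Rightarrow> coeff (pcompose p [:s, 1:]) j)" for s
    by (simp add: pcompose_pCons coeff_pCons split: nat.split)
  have limit: "coeff (pCons a p) i = coeff [:a:] i + 0 * coeff p i + (case i of 0 \<Rightarrow> 0 | Suc j \<Rightarrow> coeff p j)"
    by (cases i) simp_all
  have "(\<lambda>k. case i of 0 \<Rightarrow> 0 | Suc j \<Rightarrow> coeff (pcompose p [:t k, 1:]) j)
      \<longlonglongrightarrow> (case i of 0 \<Rightarrow> 0 | Suc j \<Rightarrow> coeff p j)"
    by (cases i) (simp_all only: nat.case pCons.IH tendsto_const)
  then show ?case
    unfolding expand limit by (intro tendsto_add tendsto_mult tendsto_const assms pCons.IH)
qed

lemma uniform_limit_finite_combination: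
  fixes c :: "nat \<Rightarrow> 'i \<Rightarrow> 'a::real_normed_field" and \<phi> :: "'i \<Rightarrow> 'b::topological_space \<Rightarrow> 'a"
  assumes "finite I" "compact K"
    and "\<And>i. i \<in> I \<Longrightarrow> (\<lambda>k. c k i) \<longlonglongrightarrow> c0 i"
    and "\<And>i. i \<in> I \<Longrightarrow> continuous_on K (\<phi> i)"
  shows "uniform_limit K (\<lambda>k z. \<Sum>i\<in>I. c k i * \<phi> i z) (\<lambda>z. \<Sum>i\<in>I. c0 i * \<phi> i z) sequentially"
  using assms(1,3,4)
proof (induction I rule: finite_induct)
  case empty
  then show ?case by (simp add: uniform_limit_const)
next
  case (insert j I)
  have "uniform_limit K (\<lambda>k z. c k j) (\<lambda>z. c0 j) sequentially"
  proof (rule uniform_limitI)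
    fix e :: real assume "e > 0"
    with insert.prems(1)[of j] have "\<forall>\<^sub>F k in sequentially. dist (c k j) (c0 j) < e"
      by (simp add: tendsto_iff)
    then show "\<forall>\<^sub>F k in sequentially. \<forall>z\<in>K. dist (c k j) (c0 j) < e" by simp
  qed
  moreover have "bounded (\<phi> j ` K)"
    using insert.prems(2)[of j] assms(2) by (simp add: compact_imp_bounded compact_continuous_image)
  moreover have "bounded ((\<lambda>z. c0 j) ` K)" by (rule bounded_subset[of "{c0 j}"]) auto
  ultimately have "uniform_limit K (\<lambda>k z. c k j * \<phi> j z) (\<lambda>z. c0 j * \<phi> j z) sequentially"
    by (intro uniform_limit_intros) auto
  with insert show ?case by (simp add: uniform_limit_add)
qed

lemma lin_op_uniform_limit:
  assumes lin: "lin_op T" and deg: "\<And>k. degree (p k) \<le> n" "degree q \<le> n"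
    and coeff: "\<And>i. (\<lambda>k. coeff (p k) i) \<longlonglongrightarrow> coeff q i" and "compact K"
  shows "uniform_limit K (\<lambda>k. poly (T (p k))) (poly (T q)) sequentially"
proof -
  have "uniform_limit K (\<lambda>k z. \<Sum>i\<le>n. coeff (p k) i * poly (T (monom 1 i)) z)
      (\<lambda>z. \<Sum>i\<le>n. coeff q i * poly (T (monom 1 i)) z) sequentially"
    using coeff \<open>compact K\<close> by (intro uniform_limit_finite_combination) (auto intro: continuous_intros)
  moreover have "poly (T (p k)) = (\<lambda>z. \<Sum>i\<le>n. coeff (p k) i * poly (T (monom 1 i)) z)" for k
    by (rule ext) (rule poly_lin_op_expansion[OF lin deg(1)])
  moreover have "poly (T q) = (\<lambda>z. \<Sum>i\<le>n. coeff q i * poly (T (monom 1 i)) z)"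
    by (rule ext) (rule poly_lin_op_expansion[OF lin deg(2)])
  ultimately show ?thesis by simp
qed

lemma stable1_or_zero_uniform_limit:
  fixes p :: "nat \<Rightarrow> complex poly"
  assumes stable: "\<And>k. stable1 (p k) \<or> p k = 0"
    and lim: "\<And>K. compact K \<Longrightarrow> K \<subseteq> {z. Im z > 0} \<Longrightarrow>
                uniform_limit K (\<lambda>k. poly (p k)) (poly q) sequentially"
  shows "stable1 q \<or> q = 0"
proof (rule ccontr)
  assume "\<not> (stable1 q \<or> q = 0)"
  then obtain z0 where z0: "Im z0 > 0" "poly q z0 = 0" and "q \<noteq> 0" by (auto simp: stable1_def)
  obtain z1 where z1: "Im z1 > 0" "poly q z1 \<noteq> 0" using exists_upper_nonroot[OF \<open>q \<noteq> 0\<close>] by blast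
  have "(\<lambda>k. poly (p k) z1) \<longlonglongrightarrow> poly q z1"
    using tendsto_uniform_limitI[OF lim[of "{z1}"]] z1 by simp
  then have "\<forall>\<^sub>F k in sequentially. poly (p k) z1 \<noteq> 0"
    using z1(2) by (rule tendsto_imp_eventually_ne)
  then obtain k0 where k0: "\<And>k. k \<ge> k0 \<Longrightarrow> poly (p k) z1 \<noteq> 0"
    unfolding eventually_sequentially by blast
  define H where "H = {z. Im z > 0}"
  have "poly q z0 \<noteq> 0"
  proof (rule Hurwitz_no_zeros[of H "\<lambda>k. poly (p (k + k0))" "poly q"])
    show "open H" unfolding H_def by (rule open_halfspace_Im_gt)
    show "connected H" unfolding H_def by (rule convex_connected[OF convex_halfspace_Im_gt])
    show "poly (p (k + k0)) holomorphic_on H" for k by (intro holomorphic_intros)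
    show "poly q holomorphic_on H" by (intro holomorphic_intros)
    show "uniform_limit K (\<lambda>k. poly (p (k + k0))) (poly q) sequentially"
      if "compact K" "K \<subseteq> H" for K
      using filterlim_compose[OF lim filterlim_add_const_nat_at_top] that by (simp add: H_def)
    show "\<not> poly q constant_on H"
      using z0 z1 unfolding constant_on_def H_def by force
    show "poly (p (k + k0)) z \<noteq> 0" if "z \<in> H" for k z
    proof -
      have "p (k + k0) \<noteq> 0" using k0[of "k + k0"] by auto
      with stable have "stable1 (p (k + k0))" by blast
      with that show ?thesis by (simp add: H_def stable1_iff)
    qed
    show "z0 \<in> H" using z0 by (simp add: H_def)
  qed
  with z0 show False by simp
qed

lemma symbol_condition_preserves_stable:
  assumes lin: "lin_op T" and cond: "symbol_condition T (degree f)" and "stable1 f"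
  shows "stable1 (T f) \<or> T f = 0"
proof -
  define t where "t = (\<lambda>k. complex_of_real (inverse (Suc k)) * \<i>)"
  define f_shift where "f_shift k = pcompose f [:t k, 1:]" for k
  have "t \<longlonglongrightarrow> complex_of_real 0 * \<i>"
    unfolding t_def by (intro tendsto_mult_right tendsto_of_real LIMSEQ_inverse_real_of_nat)
  then have "t \<longlonglongrightarrow> 0" by simp
  have "\<And>k. degree (f_shift k) = degree f" by (simp add: f_shift_def degree_pcompose)
  have "stable1 (T (f_shift k)) \<or> T (f_shift k) = 0" for k
  proof (rule symbol_condition_preserves_lower_rooted[OF lin])
    show "symbol_condition T (degree (f_shift k))" using cond by (simp add: f_shift_def degree_pcompose)
    show "poly (f_shift k) u \<noteq> 0" if "Im u \<ge> 0" for u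
    proof -
      have "Im (t k) > 0" by (simp add: t_def zero_less_divide_iff)
      with that have "Im (u + t k) > 0" by simp
      with \<open>stable1 f\<close> show ?thesis by (simp add: f_shift_def poly_pcompose stable1_iff add.commute)
    qed
  qed
  moreover have "uniform_limit K (\<lambda>k. poly (T (f_shift k))) (poly (T f)) sequentially"
    if "compact K" for K
    using \<open>\<And>k. degree (f_shift k) = degree f\<close> coeff_pcompose_shift_tendsto[OF \<open>t \<longlonglongrightarrow> 0\<close>] that
    unfolding f_shift_def by (intro lin_op_uniform_limit[OF lin]) auto
  ultimately show ?thesis by (rule stable1_or_zero_uniform_limit)
qed

theorem mainTheorem5:
  fixes T :: "complex poly \<Rightarrow> complex poly"
  assumes "lin_op T"
  shows "(\<forall>f. stable1 f \<longrightarrow> stable1 (T f) \<or> T f = 0) \<longleftrightarrow>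
         ((\<exists>\<alpha> P. lin_fun \<alpha> \<and> stable1 P \<and> (\<forall>f. T f = smult (\<alpha> f) P))
          \<or> (\<forall>n::nat. stable2 (extend2 T (z_plus_w ^ n)) \<or> extend2 T (z_plus_w ^ n) = 0))"
proof -
  have "stability_preserver T \<longleftrightarrow> stable_rank_one T \<or> (\<forall>n. symbol_condition T n)"
  proof
    assume "stability_preserver T"
    then show "stable_rank_one T \<or> (\<forall>n. symbol_condition T n)"
      using preserver_symbol_condition[OF assms] by blast
  next
    assume "stable_rank_one T \<or> (\<forall>n. symbol_condition T n)"
    then show "stability_preserver T"
      using stable_rank_one_preserver symbol_condition_preserves_stable[OF assms]
      unfolding stability_preserver_def by blast
  qed
  then show ?thesis
    by (simp add: stability_preserver_def stable_rank_one_def symbol_condition_iff[OF assms])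
qed

end
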